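(* Let $k\ge r\ge3$ and $m\ge0$ be integers, and let $\pi\in\mathbb{C}_{<}(k,r|p,t)$ for some integers $p,t\ge0$ with $p+t=m$. Then there do not exist integers $p',t'\ge0$ with $p'\ne p$, $t'\ne t$, $p'+t'=m$ and $\pi\in\mathbb{C}_{<}(k,r|p',t')$.
   Context: A partition $\pi=(\pi_1,\dots,\pi_\ell)$ is a finite non-increasing sequence of positive integers; "$a$ occurs in $\pi$" means $a=\pi_i$ for some $i$. Göllnitz–Gordon marking: $GG(\pi)$ assigns a positive integer (mark) to each part, processing the parts from smallest to largest; $\pi_i$ receives the smallest positive integer different from the marks of all parts $\pi_g$ with $g>i$ and $\pi_i-\pi_g\le 2$, where $\pi_i-\pi_g<2$ is required when $\pi_i$ is odd. An "$r$-marked part $a$" is a part equal to $a$ with mark $r$. $N_i(\pi)$ is the number of parts with mark $i$; $\pi^{(i)}_1\ge\dots\ge\pi^{(i)}_{N_i(\pi)}$ are the parts with mark $i$, with $\pi^{(i)}_0=+\infty$, $\pi^{(i)}_{N_i(\pi)+1}=-\infty$. $\mathbb{C}(k,r)$: partitions with (i) no odd part repeated; (ii) $\pi_i\ge\pi_{i+k-1}+2$ for $1\le i\le\ell-k+1$, strict if $\pi_i$ even; (iii) at most $r-1$ parts $\le 2$. Starting types: for $\pi\in\mathbb{C}(k,r)$ with $N_2=N_2(\pi)\ge1$, let $l$ be the largest integer in $\{0,\dots,N_2\}$ such that no odd part of $\pi$ is $\ge\pi^{(2)}_l$; for $l<i\le N_2$, $\pi^{(2)}_i$ has type $s_{-1}$.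 For $b=1,\dots,l$ in increasing order, type and auxiliary $\sigma_b$: for $b=1$: Case 1: 1-marked part $\pi^{(2)}_1-1$ exists and $\pi^{(2)}_1+2$ does not occur: type $s_0$, $\sigma_1=\pi^{(2)}_1-1$; Case 2: 1-marked $\pi^{(2)}_1-2$ exists and $\pi^{(2)}_1+2$ does not occur: type $s_1$, $\sigma_1=\pi^{(2)}_1-2$; Case 3: 1-marked $\pi^{(2)}_1+2$ exists: type $s_2$, $\sigma_1=\pi^{(2)}_1+2$; Case 4: 1-marked $\pi^{(2)}_1$ exists: type $s_3$, $\sigma_1=\pi^{(2)}_1$. For $2\le b\le l$: Case 1: 1-marked $\pi^{(2)}_b-1$ exists and, if a 1-marked $\pi^{(2)}_b+2$ exists, $\sigma_{b-1}=\pi^{(2)}_b+2$: type $s_0$, $\sigma_b=\pi^{(2)}_b-1$; Case 2: same with $\pi^{(2)}_b-2$: type $s_1$, $\sigma_b=\pi^{(2)}_b-2$; Case 3: 1-marked $\pi^{(2)}_b+2$ exists and $\sigma_{b-1}\ne\pi^{(2)}_b+2$: type $s_2$, $\sigma_b=\pi^{(2)}_b+2$; Case 4: 1-marked $\pi^{(2)}_b$ exists: type $s_3$, $\sigma_b=\pi^{(2)}_b$. $\mathbb{C}_{<}(k,r|p,t)$: the set of $\pi\in\mathbb{C}(k,r)$ such that (1) no odd part is $\ge 2t+1$; (2) $\pi^{(2)}_{p+1}<2t+1<\pi^{(2)}_p$ (in particular $p\le N_2(\pi)$); (3) if $\pi^{(2)}_p=2t+2$ then it is of starting type $s_2$ or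 $s_3$; (4) if $\pi^{(2)}_{p+1}=2t$ then it is of starting type $s_0$ or $s_1$. *)

theory Defs
  imports Main "HOL-Library.Extended_Real"
begin

text \<open>A partition is a list of positive naturals in non-increasing order;
  element i (0-based) of the list is the part pi_(i+1).\<close>

definition is_partition :: "nat list \<Rightarrow> bool" where
  "is_partition xs \<longleftrightarrow> sorted_wrt (\<ge>) xs \<and> (\<forall>x\<in>set xs. 0 < x)"

definition occurs :: "nat \<Rightarrow> nat list \<Rightarrow> bool" where
  "occurs a xs \<longleftrightarrow> a \<in> set xs"

text \<open>Goellnitz-Gordon marking.  gg xs ! i is the mark of xs ! i.  Marks of a part
  only depend on the (smaller) parts after it, so we recurse on the tail.\<close>

fun gg :: "nat list \<Rightarrow> nat list" where
  "gg [] = []"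
| "gg (x # xs) =
     (let ms = gg xs in
       (LEAST r::nat. 0 < r \<and>
          r \<notin> {ms ! j | j. j < length xs \<and> x - xs ! j \<le> 2
                              \<and> (odd x \<longrightarrow> x - xs ! j < 2)}) # ms)"

definition marked :: "nat list \<Rightarrow> nat \<Rightarrow> nat \<Rightarrow> bool" where
  "marked xs r a \<longleftrightarrow> (\<exists>j < length xs. xs ! j = a \<and> gg xs ! j = r)"

definition marked_parts :: "nat list \<Rightarrow> nat \<Rightarrow> nat list" where
  "marked_parts xs i = [xs ! j. j \<leftarrow> [0..<length xs], gg xs ! j = i]"

definition N :: "nat list \<Rightarrow> nat \<Rightarrow> nat" where
  "N xs i = length (marked_parts xs i)"

definition mpart :: "nat list \<Rightarrow> nat \<Rightarrow> nat \<Rightarrow> ereal" where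
  "mpart xs i j =
     (if j = 0 then \<infinity>
      else if j \<le> N xs i then ereal (real (marked_parts xs i ! (j - 1)))
      else -\<infinity>)"

definition C :: "nat \<Rightarrow> nat \<Rightarrow> nat list set" where
  "C k r = {xs. is_partition xs
     \<and> (\<forall>i j. i < j \<and> j < length xs \<and> xs ! i = xs ! j \<longrightarrow> even (xs ! i))
     \<and> (\<forall>i. i + k - 1 < length xs \<longrightarrow>
           xs ! (i + k - 1) + 2 \<le> xs ! i
           \<and> (even (xs ! i) \<longrightarrow> xs ! (i + k - 1) + 2 < xs ! i))
     \<and> length (filter (\<lambda>x. x \<le> 2) xs) \<le> r - 1}"

datatype stype = Sm1 | S0 | S1 | S2 | S3

definition lidx :: "nat list \<Rightarrow> nat" where
  "lidx xs = (GREATEST l. l \<le> N xs 2 \<and>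
                 (\<forall>x\<in>set xs. odd x \<longrightarrow> ereal (real x) < mpart xs 2 l))"

text \<open>st_aux xs b = Some (type, sigma_b) for 1 <= b (meaningful for b <= l);
  the cases are tried in the order 1,2,3,4; None if no case applies.\<close>
fun st_aux :: "nat list \<Rightarrow> nat \<Rightarrow> (stype \<times> nat) option" where
  "st_aux xs 0 = None"
| "st_aux xs (Suc b) =
    (let v = marked_parts xs 2 ! b;
         prev = st_aux xs b;
         one = marked xs 1
     in if b = 0 then
          (if one (v - 1) \<and> 1 \<le> v \<and> \<not> occurs (v + 2) xs then Some (S0, v - 1)
           else if one (v - 2) \<and> 2 \<le> v \<and> \<not> occurs (v + 2) xs then Some (S1, v - 2)
           else if one (v + 2) then Some (S2, v + 2)
           else if one v then Some (S3, v)
           else None)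
        else (case prev of None \<Rightarrow> None | Some (_, \<sigma>) \<Rightarrow>
          (if one (v - 1) \<and> 1 \<le> v \<and> (one (v + 2) \<longrightarrow> \<sigma> = v + 2) then Some (S0, v - 1)
           else if one (v - 2) \<and> 2 \<le> v \<and> (one (v + 2) \<longrightarrow> \<sigma> = v + 2) then Some (S1, v - 2)
           else if one (v + 2) \<and> \<sigma> \<noteq> v + 2 then Some (S2, v + 2)
           else if one v then Some (S3, v)
           else None)))"

definition start_type :: "nat list \<Rightarrow> nat \<Rightarrow> stype option" where
  "start_type xs b = (if lidx xs < b then Some Sm1 else map_option fst (st_aux xs b))"

definition Cless :: "nat \<Rightarrow> nat \<Rightarrow> nat \<Rightarrow> nat \<Rightarrow> nat list set" where
  "Cless k r p t = {xs. xs \<in> C k r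
     \<and> (\<forall>x\<in>set xs. odd x \<longrightarrow> x < 2 * t + 1)
     \<and> p \<le> N xs 2
     \<and> mpart xs 2 (p + 1) < ereal (real (2 * t + 1))
     \<and> ereal (real (2 * t + 1)) < mpart xs 2 p
     \<and> (mpart xs 2 p = ereal (real (2 * t + 2)) \<longrightarrow>
          start_type xs p \<in> {Some S2, Some S3})
     \<and> (mpart xs 2 (p + 1) = ereal (real (2 * t)) \<longrightarrow>
          start_type xs (p + 1) \<in> {Some S0, Some S1})}"

end

theory Submission
  imports Defs
begin

text \<open>Two parts with the same Goellnitz-Gordon mark differ by at least 2, and by at least 3
  if the larger one is even; hence consecutive 2-marked parts drop by at least 2 each step. If pi lay in
  both Cless(k,r|p,t) and Cless(k,r|p+q,t-q) with q > 0, the q - 1 gaps between the 2-marked parts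
  number p+1 and p+q would squeeze the first down to exactly 2t. For q = 1 the two boundary
  conditions then assign to this part a starting type in both {s0,s1} and {s2,s3}; for q > 1 the
  part 2t is even, so the first gap is at least 3 and the (p+q)-th part is at most 2(t-q)+1,
  contradicting membership in the second set.\<close>

lemma length_gg [simp]: "length (gg xs) = length xs"
  by (induction xs) (auto simp: Let_def)

lemma Least_positive_notin:
  assumes "finite (S :: nat set)"
  shows "(LEAST r. 0 < r \<and> r \<notin> S) \<notin> S"
proof -
  have "\<exists>r::nat. 0 < r \<and> r \<notin> S"
    using assms by (metis ex_new_if_finite finite_insert infinite_UNIV_nat insertCI not_gr_zero)
  then show ?thesis
    by (metis (mono_tags, lifting) LeastI_ex)
qed

lemma gg_Cons_head_apart:
  fixes x :: nat
  assumes "j < length xs" "gg (x # xs) ! 0 = gg xs ! j"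
  shows "\<not> (x - xs ! j \<le> 2 \<and> (odd x \<longrightarrow> x - xs ! j < 2))"
proof
  define S where "S = {gg xs ! i | i. i < length xs \<and> x - xs ! i \<le> 2 \<and> (odd x \<longrightarrow> x - xs ! i < 2)}"
  assume "x - xs ! j \<le> 2 \<and> (odd x \<longrightarrow> x - xs ! j < 2)"
  then have "gg (x # xs) ! 0 \<in> S"
    unfolding S_def using assms by blast
  moreover have "finite S"
    unfolding S_def by simp
  moreover have "gg (x # xs) ! 0 = (LEAST r. 0 < r \<and> r \<notin> S)"
    unfolding S_def by (simp add: Let_def)
  ultimately show False
    using Least_positive_notin by simp
qed

lemma gg_same_mark_apart:
  assumes "a < b" "b < length xs" "gg xs ! a = gg xs ! b"
  shows "\<not> (xs ! a - xs ! b \<le> 2 \<and> (odd (xs ! a) \<longrightarrow> xs ! a - xs ! b < 2))"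
  using assms
proof (induction xs arbitrary: a b)
  case Nil
  then show ?case by simp
next
  case (Cons x xs)
  obtain j where b: "b = Suc j"
    using Cons.prems(1) by (cases b) auto
  have mark_b: "gg (x # xs) ! b = gg xs ! j"
    using b by (simp add: Let_def)
  show ?case
  proof (cases a)
    case 0
    then show ?thesis
      using gg_Cons_head_apart[of j xs x] Cons.prems b mark_b by simp
  next
    case (Suc a')
    then show ?thesis
      using Cons.IH[of a' j] Cons.prems b mark_b by (simp add: Let_def)
  qed
qed

lemma concat_map_if_singleton:
  "concat (map (\<lambda>x. if P x then [f x] else []) xs) = map f (filter P xs)"
  by (induction xs) auto

lemma marked_parts_eq_map_filter:
  "marked_parts xs i = map (nth xs) (filter (\<lambda>j. gg xs ! j = i) [0..<length xs])"
  unfolding marked_parts_def by (simp add: concat_map_if_singleton)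

lemma marked_parts_nth_positions:
  assumes "i < i'" "i' < length (marked_parts xs c)"
  obtains a b where "a < b" "b < length xs" "gg xs ! a = c" "gg xs ! b = c"
    "marked_parts xs c ! i = xs ! a" "marked_parts xs c ! i' = xs ! b"
proof -
  define L where "L = filter (\<lambda>j. gg xs ! j = c) [0..<length xs]"
  have mp: "marked_parts xs c = map (nth xs) L"
    by (simp add: marked_parts_eq_map_filter L_def)
  have "sorted_wrt (<) L"
    unfolding L_def using sorted_wrt_filter sorted_wrt_upt by blast
  moreover have "i' < length L"
    using assms mp by simp
  ultimately have "L ! i < L ! i'"
    using assms(1) sorted_wrt_nth_less by blast
  moreover have "L ! i \<in> set L" "L ! i' \<in> set L"
    using \<open>i' < length L\<close> assms(1) by auto
  ultimately show ?thesis
    using that[of "L ! i" "L ! i'"] \<open>i' < length L\<close> assms(1) mp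
    unfolding L_def by auto
qed

lemma marked_parts_gap:
  assumes "is_partition xs" "Suc i < length (marked_parts xs c)"
  shows "marked_parts xs c ! Suc i + 2 \<le> marked_parts xs c ! i"
    and "even (marked_parts xs c ! i) \<Longrightarrow> marked_parts xs c ! Suc i + 3 \<le> marked_parts xs c ! i"
proof -
  obtain a b where ab: "a < b" "b < length xs" "gg xs ! a = c" "gg xs ! b = c"
    "marked_parts xs c ! i = xs ! a" "marked_parts xs c ! Suc i = xs ! b"
    using marked_parts_nth_positions[of i "Suc i" xs c] assms(2) by auto
  have "xs ! b \<le> xs ! a"
    using assms(1) ab(1,2) unfolding is_partition_def by (simp add: sorted_wrt_iff_nth_less)
  moreover have "\<not> (xs ! a - xs ! b \<le> 2 \<and> (odd (xs ! a) \<longrightarrow> xs ! a - xs ! b < 2))"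
    using gg_same_mark_apart[of a b xs] ab by simp
  ultimately show "marked_parts xs c ! Suc i + 2 \<le> marked_parts xs c ! i"
    and "even (marked_parts xs c ! i) \<Longrightarrow> marked_parts xs c ! Suc i + 3 \<le> marked_parts xs c ! i"
    using ab(5,6) by presburger+
qed

lemma marked_parts_decrease:
  assumes "is_partition xs" "i + d < length (marked_parts xs c)"
  shows "marked_parts xs c ! (i + d) + 2 * d \<le> marked_parts xs c ! i"
  using assms(2)
proof (induction d)
  case 0
  then show ?case by simp
next
  case (Suc d)
  then show ?case
    using marked_parts_gap(1)[OF assms(1), of "i + d" c] by simp
qed

lemma mpart_eq_marked_parts_nth: "1 \<le> j \<Longrightarrow> j \<le> N xs i \<Longrightarrow> mpart xs i j = real (marked_parts xs i ! (j - 1))"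
  unfolding mpart_def by simp

lemma Cless_upper_boundary:
  assumes "xs \<in> Cless k r p t" "0 < p"
  shows "2 * t + 1 < marked_parts xs 2 ! (p - 1)"
    and "marked_parts xs 2 ! (p - 1) = 2 * t + 2 \<Longrightarrow> start_type xs p \<in> {Some S2, Some S3}"
  using assms mpart_eq_marked_parts_nth[of p xs 2] unfolding Cless_def by auto

lemma Cless_lower_boundary:
  assumes "xs \<in> Cless k r p t" "p < N xs 2"
  shows "marked_parts xs 2 ! p < 2 * t + 1"
    and "marked_parts xs 2 ! p = 2 * t \<Longrightarrow> start_type xs (p + 1) \<in> {Some S0, Some S1}"
  using assms mpart_eq_marked_parts_nth[of "p + 1" xs 2] unfolding Cless_def by auto

lemma Cless_is_partition: "xs \<in> Cless k r p t \<Longrightarrow> is_partition xs"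
  unfolding Cless_def C_def by simp

lemma Cless_le_N: "xs \<in> Cless k r p t \<Longrightarrow> p \<le> N xs 2"
  unfolding Cless_def by simp

lemma Cless_shift_forces_even_part:
  assumes "xs \<in> Cless k r p (t' + q)" "xs \<in> Cless k r (p + q) t'" "0 < q"
  shows "marked_parts xs 2 ! p = 2 * (t' + q)"
proof -
  let ?ms = "marked_parts xs 2"
  obtain d where q: "q = Suc d"
    using assms(3) gr0_implies_Suc by blast
  have "p + q \<le> length ?ms"
    using Cless_le_N[OF assms(2)] unfolding N_def .
  then have "?ms ! (p + d) + 2 * d \<le> ?ms ! p"
    using marked_parts_decrease[OF Cless_is_partition[OF assms(1)], of p d 2] q by simp
  moreover have "2 * t' + 1 < ?ms ! (p + d)"
    using Cless_upper_boundary(1)[OF assms(2)] q by simp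
  moreover have "?ms ! p < 2 * (t' + q) + 1"
    using Cless_lower_boundary(1)[OF assms(1)] \<open>p + q \<le> length ?ms\<close> q
    unfolding N_def by simp
  ultimately show ?thesis
    using q by presburger
qed

lemma Cless_not_shifted:
  assumes "xs \<in> Cless k r p (t' + q)" "xs \<in> Cless k r (p + q) t'" "0 < q"
  shows False
proof -
  let ?ms = "marked_parts xs 2"
  have even_part: "?ms ! p = 2 * (t' + q)"
    using Cless_shift_forces_even_part[OF assms] .
  have len: "p + q \<le> length ?ms"
    using Cless_le_N[OF assms(2)] unfolding N_def .
  consider "q = 1" | d where "q = Suc (Suc d)"
    using assms(3) by (metis One_nat_def gr0_implies_Suc not0_implies_Suc)
  then show False
  proof cases
    case 1
    then have "start_type xs (p + 1) \<in> {Some S0, Some S1}"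
      using Cless_lower_boundary(2)[OF assms(1)] even_part len unfolding N_def by simp
    moreover have "start_type xs (p + 1) \<in> {Some S2, Some S3}"
      using Cless_upper_boundary(2)[OF assms(2)] even_part 1 by simp
    ultimately show False
      by auto
  next
    case (2 d)
    have "?ms ! Suc p + 3 \<le> ?ms ! p"
      using marked_parts_gap(2)[OF Cless_is_partition[OF assms(1)], of p 2] even_part len 2
      by simp
    moreover have "?ms ! (Suc p + d) + 2 * d \<le> ?ms ! Suc p"
      using marked_parts_decrease[OF Cless_is_partition[OF assms(1)], of "Suc p" d 2] len 2
      by simp
    moreover have "2 * t' + 1 < ?ms ! (Suc p + d)"
      using Cless_upper_boundary(1)[OF assms(2)] 2 by simp
    ultimately show False
      using even_part 2 by presburger
  qed
qed

theorem proposition5p2: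
  fixes k r m p t :: nat and xs :: "nat list"
  assumes "r \<le> k" and "3 \<le> r"
    and "p + t = m"
    and "xs \<in> Cless k r p t"
  shows "\<not> (\<exists>p' t' :: nat. p' \<noteq> p \<and> t' \<noteq> t \<and> p' + t' = m \<and> xs \<in> Cless k r p' t')"
proof
  assume "\<exists>p' t' :: nat. p' \<noteq> p \<and> t' \<noteq> t \<and> p' + t' = m \<and> xs \<in> Cless k r p' t'"
  then obtain p' t' where "p' \<noteq> p" "p' + t' = m" "xs \<in> Cless k r p' t'"
    by blast
  then consider "p < p'" "t = t' + (p' - p)" | "p' < p" "t' = t + (p - p')"
    using assms(3) by fastforce
  then show False
  proof cases
    case 1
    then show False
      using Cless_not_shifted[of xs k r p t' "p' - p"] assms(4) \<open>xs \<in> Cless k r p' t'\<close> by simp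
  next
    case 2
    then show False
      using Cless_not_shifted[of xs k r p' t "p - p'"] assms(4) \<open>xs \<in> Cless k r p' t'\<close> by simp
  qed
qed

end
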